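(* Let $T$ be a compactum and $\mathbf a,\mathbf b,\mathbf c,\mathbf d$ entourages of $T$. If $\mathbf a-\mathbf b-\mathbf c\ (4)$, $\mathbf a\#\mathbf d$ and $\mathbf c\#\mathbf d$, then $\mathbf b\#\mathbf d$.
   Context: Let $T$ be a compact Hausdorff space, $S^2T$ the space of unordered pairs of points of $T$ (diagonal allowed), $\Delta^2T$ the diagonal. An entourage is a neighborhood of $\Delta^2T$ in $S^2T$. For an entourage $\mathbf e$, $\Delta_{\mathbf e}$ is the graph distance on $T$ for the graph with vertex set $T$ and edges the pairs in $\mathbf e$; for sets, $\Delta_{\mathbf e}(a,b)=\inf$ over $x\in a,y\in b$. A set is $\mathbf e$-small if its $\Delta_{\mathbf e}$-diameter is $\le1$. Entourages $\mathbf a,\mathbf b$ are unlinked ($\mathbf a\bowtie\mathbf b$) if $T=a\cup b$ for an $\mathbf a$-small $a$ and a $\mathbf b$-small $b$; otherwise linked ($\mathbf a\#\mathbf b$). Standing conventions: every entourage considered is linked with itself and $T$ has $\Delta_{\mathbf a}$-diameter $>4$. For $\mathbf a\bowtie\mathbf b$, $\mathrm{sh}_{\mathbf a}\mathbf b=\bigcap\{a: a\ \mathbf a\text{-small},\ T\setminus a\ \mathbf b\text{-small}\}$. $\mathbf a-\mathbf b-\mathbf c\ (k)$ means $\mathbf a\bowtie\mathbf b\bowtie\mathbf c$ and $\Delta_{\mathbf b}(\mathrm{sh}_{\mathbf b}\mathbf a,\mathrm{sh}_{\mathbf b}\mathbf c)>k$. *)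

theory Defs
  imports "HOL-Analysis.Analysis" "HOL-Library.Extended_Nat"
begin

text \<open>The compactum T is the universe of a type of class t2_space with compact UNIV.
  Unordered pairs (points of S^2T) are represented by symmetric relations on T; a
  neighbourhood of the diagonal in S^2T corresponds to a symmetric subset of T x T
  containing an open neighbourhood of the diagonal.\<close>

definition entourage :: "('a::topological_space \<times> 'a) set \<Rightarrow> bool" where
  "entourage E \<longleftrightarrow> sym E \<and> (\<exists>U. open U \<and> Id \<subseteq> U \<and> U \<subseteq> E)"

definition gdist :: "('a \<times> 'a) set \<Rightarrow> 'a \<Rightarrow> 'a \<Rightarrow> enat" where
  "gdist E x y = Inf {enat n | n. (x, y) \<in> E ^^ n}"

definition setdist :: "('a \<times> 'a) set \<Rightarrow> 'a set \<Rightarrow> 'a set \<Rightarrow> enat" where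
  "setdist E A B = Inf {gdist E x y | x y. x \<in> A \<and> y \<in> B}"

definition gdiam :: "('a \<times> 'a) set \<Rightarrow> 'a set \<Rightarrow> enat" where
  "gdiam E A = Sup {gdist E x y | x y. x \<in> A \<and> y \<in> A}"

definition small :: "('a \<times> 'a) set \<Rightarrow> 'a set \<Rightarrow> bool" where
  "small E A \<longleftrightarrow> gdiam E A \<le> 1"

definition unlinked :: "('a \<times> 'a) set \<Rightarrow> ('a \<times> 'a) set \<Rightarrow> bool" where
  "unlinked A B \<longleftrightarrow> (\<exists>a b. UNIV = a \<union> b \<and> small A a \<and> small B b)"

definition linked :: "('a \<times> 'a) set \<Rightarrow> ('a \<times> 'a) set \<Rightarrow> bool" where
  "linked A B \<longleftrightarrow> \<not> unlinked A B"

definition sh :: "('a \<times> 'a) set \<Rightarrow> ('a \<times> 'a) set \<Rightarrow> 'a set" where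
  "sh A B = \<Inter> {a. small A a \<and> small B (UNIV - a)}"

definition chain3 :: "('a \<times> 'a) set \<Rightarrow> ('a \<times> 'a) set \<Rightarrow> ('a \<times> 'a) set \<Rightarrow> enat \<Rightarrow> bool" where
  "chain3 A B C k \<longleftrightarrow> unlinked A B \<and> unlinked B C \<and> setdist B (sh B A) (sh B C) > k"

text \<open>Standing conventions for an entourage considered in the paper.\<close>
definition admissible :: "('a::topological_space \<times> 'a) set \<Rightarrow> bool" where
  "admissible E \<longleftrightarrow> entourage E \<and> linked E E \<and> gdiam E UNIV > 4"

end

theory Submission
  imports Defs
begin

text \<open>
  Suppose, to the contrary, that \<open>b \<bowtie> d\<close>, i.e. the space is covered by a
  \<open>b\<close>-small set \<open>p\<close> and a \<open>d\<close>-small set \<open>q\<close>.  Since \<open>a \<bowtie> b\<close>, some \<open>b\<close>-small set \<open>x\<close>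
  has \<open>a\<close>-small complement; it contains the shadow \<open>sh b a\<close>, and it cannot lie inside \<open>q\<close>
  because \<open>a # d\<close>.  Hence every point of \<open>sh b a\<close> is within \<open>b\<close>-distance 1 of a point of
  \<open>p\<close>, and likewise for \<open>sh b c\<close>.  As \<open>p\<close> is \<open>b\<close>-small, points of the two shadows are
  within \<open>b\<close>-distance 3; the shadows are nonempty because \<open>b\<close> is self-linked and the
  spaces are large, so their distance is at most 3, contradicting \<open>a - b - c (4)\<close>.
\<close>

lemma gdist_le_enat_iff: "gdist E x y \<le> enat k \<longleftrightarrow> (\<exists>n\<le>k. (x, y) \<in> E ^^ n)"
proof
  assume le: "gdist E x y \<le> enat k"
  let ?S = "{enat n | n. (x, y) \<in> E ^^ n}"
  have "?S \<noteq> {}"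
  proof
    assume "?S = {}"
    then have "gdist E x y = \<infinity>" unfolding gdist_def by (simp add: Inf_enat_def)
    with le show False by simp
  qed
  then have "gdist E x y \<in> ?S" unfolding gdist_def Inf_enat_def
    by (simp only: if_False) (rule LeastI_ex, blast)
  then obtain n where "gdist E x y = enat n" "(x, y) \<in> E ^^ n" by blast
  with le show "\<exists>n\<le>k. (x, y) \<in> E ^^ n" by auto
next
  assume "\<exists>n\<le>k. (x, y) \<in> E ^^ n"
  then obtain n where n: "n \<le> k" "(x, y) \<in> E ^^ n" by blast
  have "gdist E x y \<le> enat n" unfolding gdist_def by (rule Inf_lower) (use n in blast)
  also have "\<dots> \<le> enat k" using n by simp
  finally show "gdist E x y \<le> enat k" .
qed

lemma gdist_triangle:
  assumes "gdist E x y \<le> enat m" and "gdist E y z \<le> enat n"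
  shows "gdist E x z \<le> enat (m + n)"
proof -
  obtain i where i: "i \<le> m" "(x, y) \<in> E ^^ i"
    using gdist_le_enat_iff[THEN iffD1, OF assms(1)] by blast
  obtain j where j: "j \<le> n" "(y, z) \<in> E ^^ j"
    using gdist_le_enat_iff[THEN iffD1, OF assms(2)] by blast
  have "(x, z) \<in> E ^^ (i + j)" unfolding relpow_add using i(2) j(2) by (rule relcompI)
  moreover have "i + j \<le> m + n" using i(1) j(1) by (rule add_mono)
  ultimately show ?thesis by (intro gdist_le_enat_iff[THEN iffD2] exI conjI)
qed

lemma small_iff: "small E A \<longleftrightarrow> (\<forall>x\<in>A. \<forall>y\<in>A. gdist E x y \<le> enat 1)"
  unfolding small_def gdiam_def by (auto simp: Sup_le_iff one_enat_def)

lemma small_gdist: "small E A \<Longrightarrow> x \<in> A \<Longrightarrow> y \<in> A \<Longrightarrow> gdist E x y \<le> enat 1"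
  unfolding small_iff by blast

lemma small_subset: "small E B \<Longrightarrow> A \<subseteq> B \<Longrightarrow> small E A"
  unfolding small_iff by blast

lemma unlinked_sym: "unlinked A B \<Longrightarrow> unlinked B A"
  unfolding unlinked_def by (metis sup_commute)

lemma unlinked_by_complement: "small A (UNIV - q) \<Longrightarrow> small B q \<Longrightarrow> unlinked A B"
  unfolding unlinked_def by (intro exI[of _ "UNIV - q"] exI[of _ q]) auto

text \<open>If \<open>A \<bowtie> B\<close>, the family defining \<open>sh B A\<close> is nonempty: enlarge the \<open>B\<close>-small
  half of a cover and shrink the \<open>A\<close>-small half to its complement.\<close>

lemma unlinked_obtains_split:
  assumes "unlinked A B"
  obtains x where "small B x" and "small A (UNIV - x)"
proof -
  obtain y x where "UNIV = y \<union> x" "small A y" "small B x"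
    using assms unfolding unlinked_def by blast
  then show ?thesis using small_subset[of A y "UNIV - x"] that by blast
qed

lemma sh_subset: "small B x \<Longrightarrow> small A (UNIV - x) \<Longrightarrow> sh B A \<subseteq> x"
  unfolding sh_def by blast

text \<open>The shadow of \<open>A\<close> on a self-linked \<open>B\<close> is nonempty once \<open>A\<close>-diameter exceeds 2:
  if it were empty, every point would avoid some split set \<open>x\<close>; two such sets cannot
  cover the space (\<open>B # B\<close>), so any two points share an \<open>A\<close>-small set with a common
  third point, giving \<open>A\<close>-diameter at most 2.\<close>

lemma sh_nonempty:
  assumes "linked B B" and "gdiam A UNIV > 2"
  shows "sh B A \<noteq> {}"
proof
  assume "sh B A = {}"
  then have avoid: "\<exists>x. small B x \<and> small A (UNIV - x) \<and> u \<notin> x" for u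
    unfolding sh_def by blast
  have "gdist A u v \<le> enat 2" for u v
  proof -
    obtain xu where xu: "small B xu" "small A (UNIV - xu)" "u \<notin> xu" using avoid by blast
    obtain xv where xv: "small B xv" "small A (UNIV - xv)" "v \<notin> xv" using avoid by blast
    have "UNIV \<noteq> xu \<union> xv" using xu xv assms(1) unfolding linked_def unlinked_def by blast
    then obtain w where w: "w \<notin> xu" "w \<notin> xv" by blast
    have "gdist A u w \<le> enat 1" using small_gdist[OF xu(2)] xu(3) w(1) by blast
    moreover have "gdist A w v \<le> enat 1" using small_gdist[OF xv(2)] xv(3) w(2) by blast
    ultimately have "gdist A u v \<le> enat (1 + 1)" by (rule gdist_triangle)
    then show ?thesis by (simp add: numeral_2_eq_2)
  qed
  then have "gdiam A UNIV \<le> 2" unfolding gdiam_def by (auto simp: Sup_le_iff numeral_eq_enat)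
  with assms(2) show False by simp
qed

text \<open>If \<open>A \<bowtie> B\<close> and \<open>A # D\<close>, every point of the shadow \<open>sh B A\<close> is joined (in both
  directions, since \<open>B\<close> is not assumed symmetric) by at most one \<open>B\<close>-edge to some point
  outside a given \<open>D\<close>-small set \<open>q\<close>: a split set \<open>x\<close> containing the shadow cannot lie
  inside \<open>q\<close>, as otherwise \<open>UNIV - q\<close> and \<open>q\<close> would witness \<open>A \<bowtie> D\<close>.\<close>

lemma sh_near_complement:
  assumes "unlinked A B" and "linked A D" and "small D q" and "s \<in> sh B A"
  obtains u where "u \<notin> q" and "gdist B s u \<le> enat 1" and "gdist B u s \<le> enat 1"
proof -
  obtain x where x: "small B x" "small A (UNIV - x)"
    using unlinked_obtains_split[OF assms(1)] .
  have "s \<in> x" using sh_subset[OF x] assms(4) by blast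
  have "\<not> x \<subseteq> q"
  proof
    assume "x \<subseteq> q"
    then have "small A (UNIV - q)" by (intro small_subset[OF x(2)]) blast
    then have "unlinked A D" using assms(3) by (rule unlinked_by_complement)
    with assms(2) show False unfolding linked_def by blast
  qed
  then obtain u where "u \<in> x" "u \<notin> q" by blast
  with \<open>s \<in> x\<close> show ?thesis by (intro that small_gdist[OF x(1)])
qed

theorem lemma3p3:
  fixes a b c d :: "('t::t2_space \<times> 't) set"
  assumes "compact (UNIV :: 't set)"
    and "admissible a" and "admissible b" and "admissible c" and "admissible d"
    and "chain3 a b c 4"
    and "linked a d" and "linked c d"
  shows "linked b d"
proof (rule ccontr)
  assume "\<not> linked b d"
  then obtain p q where cover: "UNIV = p \<union> q" and p: "small b p" and q: "small d q"
    unfolding linked_def unlinked_def by blast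
  have ab: "unlinked a b" and bc: "unlinked b c"
    and far: "setdist b (sh b a) (sh b c) > 4"
    using assms(6) unfolding chain3_def by auto
  have large: "gdiam a UNIV > 4" "gdiam c UNIV > 4" and "linked b b"
    using assms(2-4) unfolding admissible_def by auto
  have "(2::enat) < 4" by (simp add: numeral_eq_enat)
  then have "gdiam a UNIV > 2" "gdiam c UNIV > 2"
    using large(1,2) by (meson order.strict_trans)+
  then obtain s t where s: "s \<in> sh b a" and t: "t \<in> sh b c"
    using sh_nonempty[OF \<open>linked b b\<close>] by blast
  obtain u where u: "u \<notin> q" "gdist b s u \<le> enat 1"
    using sh_near_complement[OF ab assms(7) q s] by blast
  obtain v where v: "v \<notin> q" "gdist b v t \<le> enat 1"
    using sh_near_complement[OF unlinked_sym[OF bc] assms(8) q t] by blast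
  have "gdist b u v \<le> enat 1" using small_gdist[OF p] u(1) v(1) cover by blast
  with u(2) v(2) have "gdist b s t \<le> enat (1 + 1 + 1)" by (blast intro: gdist_triangle)
  then have "gdist b s t \<le> enat 3" by (simp add: numeral_3_eq_3)
  have "setdist b (sh b a) (sh b c) \<le> gdist b s t"
    unfolding setdist_def by (rule Inf_lower) (use s t in blast)
  also have "\<dots> \<le> enat 3" by fact
  also have "\<dots> < 4" by (simp add: numeral_eq_enat)
  finally show False using far by (rule less_asym)
qed

end
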